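(* Let $T\in\mathbb{B}(\mathscr{H})$ and let $x\in\mathscr{H}$ be a unit vector. Then \[ \left|\langle |T||T^*|x,x\rangle-\langle |T|x,x\rangle\langle |T^*|x,x\rangle\right|\le \||T|x\|\,\||T^*|x\|-|\langle Tx,x\rangle|^{2}. \]
   Context: $\mathbb{B}(\mathscr{H})$ is the algebra of bounded operators on a complex Hilbert space $\mathscr{H}$, and $|T|=(T^*T)^{1/2}$, $|T^*|=(TT^* )^{1/2}$. *)

theory Defs
  imports "HOL-Analysis.Analysis"
begin

text \<open>Complex Hilbert spaces are not available in the distribution libraries, so we
introduce them as a type class: a (real) Banach space carrying a complex scalar
multiplication compatible with the real one, and a complex inner product
(linear in the first argument, conjugate-linear in the second) inducing the norm.\<close>

class chilbert = real_normed_vector + complete_space +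
  fixes scaleC :: "complex \<Rightarrow> 'a \<Rightarrow> 'a"
    and cinner :: "'a \<Rightarrow> 'a \<Rightarrow> complex"
  assumes scaleC_add_right: "scaleC a (x + y) = scaleC a x + scaleC a y"
    and scaleC_add_left: "scaleC (a + b) x = scaleC a x + scaleC b x"
    and scaleC_scaleC: "scaleC a (scaleC b x) = scaleC (a * b) x"
    and scaleC_one: "scaleC 1 x = x"
    and scaleR_scaleC: "scaleR r x = scaleC (complex_of_real r) x"
    and cinner_commute: "cinner x y = cnj (cinner y x)"
    and cinner_add_left: "cinner (x + y) z = cinner x z + cinner y z"
    and cinner_scaleC_left: "cinner (scaleC a x) y = a * cinner x y"
    and cinner_ge_zero: "0 \<le> Re (cinner x x)"
    and cinner_eq_zero_iff: "cinner x x = 0 \<longleftrightarrow> x = 0"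
    and norm_eq_sqrt_cinner: "norm x = sqrt (Re (cinner x x))"

definition bounded_clinear :: "('a::chilbert \<Rightarrow> 'b::chilbert) \<Rightarrow> bool" where
  "bounded_clinear T \<longleftrightarrow>
     (\<forall>x y. T (x + y) = T x + T y) \<and>
     (\<forall>a x. T (scaleC a x) = scaleC a (T x)) \<and>
     (\<exists>K. \<forall>x. norm (T x) \<le> K * norm x)"

definition adj :: "('a::chilbert \<Rightarrow> 'a) \<Rightarrow> ('a \<Rightarrow> 'a)" where
  "adj T = (THE S. \<forall>x y. cinner (T x) y = cinner x (S y))"

definition positive_op :: "('a::chilbert \<Rightarrow> 'a) \<Rightarrow> bool" where
  "positive_op S \<longleftrightarrow> bounded_clinear S \<and>
     (\<forall>x. Im (cinner (S x) x) = 0 \<and> 0 \<le> Re (cinner (S x) x))"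

definition op_sqrt :: "('a::chilbert \<Rightarrow> 'a) \<Rightarrow> ('a \<Rightarrow> 'a)" where
  "op_sqrt A = (THE S. positive_op S \<and> S \<circ> S = A)"

text \<open>|T| = (T*T)^(1/2).  Note |T*| = op_abs (adj T) = (TT*)^(1/2).\<close>
definition op_abs :: "('a::chilbert \<Rightarrow> 'a) \<Rightarrow> ('a \<Rightarrow> 'a)" where
  "op_abs T = op_sqrt (adj T \<circ> T)"

end

theory Submission
  imports Defs
begin

text \<open>
Write A = |T| and B = |T*|. Since T (T* T) = (T T*) T, and positive square roots commute with
every bounded operator intertwining their squares, T A = B T; moreover B^2 = T T*. These two
relations give the mixed Schwarz inequality |<Tx,y>|^2 \<le> <Ax,x> <By,y>: for e > 0 write
T* y = (A + e) w, apply the Cauchy-Schwarz inequality of the positive form of A + e to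
<Tx,y> = <(A + e) x, w>, and note that <(A + e) w, w> = <Tw,y> \<le> <By,y> because
Tw = (B + e)^-1 B^2 y; then let e tend to 0.

For a unit vector x put a = <Ax,x>, b = <Bx,x>, u = Ax - a x and v = Bx - b x. Then
<ABx,x> - a b = <v,u>, |u| = sqrt (|Ax|^2 - a^2) and |v| = sqrt (|Bx|^2 - b^2), so the
Cauchy-Schwarz inequality followed by Aczel's inequality gives
|<v,u>| \<le> |Ax| |Bx| - a b \<le> |Ax| |Bx| - |<Tx,x>|^2.

Positive square roots exist as strong limits of the monotone iteration Y \<mapsto> (Q + Y^2) / 2.
\<close>

section \<open>Sesquilinear algebra\<close>

lemma scaleC_zero_left [simp]: "scaleC 0 (x::'a::chilbert) = 0"
  using scaleR_scaleC[of 0 x] by simp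

lemma scaleC_zero_right [simp]: "scaleC a (0::'a::chilbert) = 0"
  using scaleC_add_right[of a 0 0] by simp

lemma scaleC_minus_one: "scaleC (-1) (x::'a::chilbert) = - x"
  using scaleR_scaleC[of "-1" x] by simp

lemma cinner_zero_left [simp]: "cinner (0::'a::chilbert) y = 0"
  using cinner_scaleC_left[of 0 0 y] by simp

lemma cinner_zero_right [simp]: "cinner (y::'a::chilbert) 0 = 0"
  using cinner_commute[of y 0] by simp

lemma cinner_add_right: "cinner (x::'a::chilbert) (y + z) = cinner x y + cinner x z"
  by (metis cinner_add_left cinner_commute complex_cnj_add)

lemma cinner_scaleC_right: "cinner (x::'a::chilbert) (scaleC a y) = cnj a * cinner x y"
  by (metis cinner_commute cinner_scaleC_left complex_cnj_mult)

lemma cinner_minus_left: "cinner (- x::'a::chilbert) y = - cinner x y"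
  using cinner_scaleC_left[of "-1" x y] by (simp add: scaleC_minus_one)

lemma cinner_minus_right: "cinner (x::'a::chilbert) (- y) = - cinner x y"
  by (metis cinner_commute cinner_minus_left complex_cnj_minus)

lemma cinner_diff_left: "cinner (x - y::'a::chilbert) z = cinner x z - cinner y z"
  using cinner_add_left[of x "-y" z] by (simp add: cinner_minus_left)

lemma cinner_diff_right: "cinner (x::'a::chilbert) (y - z) = cinner x y - cinner x z"
  using cinner_add_right[of x y "-z"] by (simp add: cinner_minus_right)

lemma cinner_scaleR_left: "cinner (scaleR r x::'a::chilbert) y = complex_of_real r * cinner x y"
  by (simp add: scaleR_scaleC cinner_scaleC_left)

lemma cinner_scaleR_right: "cinner (x::'a::chilbert) (scaleR r y) = complex_of_real r * cinner x y"
  by (simp add: scaleR_scaleC cinner_scaleC_right)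

lemma cinner_self: "cinner (x::'a::chilbert) x = complex_of_real ((norm x)\<^sup>2)"
proof -
  have "Im (cinner x x) = 0"
    using arg_cong[OF cinner_commute[of x x], of Im] by simp
  then show ?thesis
    using norm_eq_sqrt_cinner[of x] cinner_ge_zero[of x] by (simp add: complex_eq_iff)
qed

lemma Re_cinner_self: "Re (cinner (x::'a::chilbert) x) = (norm x)\<^sup>2"
  by (simp add: cinner_self)

lemma norm_scaleC: "norm (scaleC a (x::'a::chilbert)) = cmod a * norm x"
proof -
  have "complex_of_real ((norm (scaleC a x))\<^sup>2) = cinner (scaleC a x) (scaleC a x)"
    by (simp add: cinner_self)
  also have "\<dots> = (a * cnj a) * cinner x x"
    by (simp add: cinner_scaleC_left cinner_scaleC_right)
  also have "\<dots> = complex_of_real ((cmod a * norm x)\<^sup>2)"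
    by (simp add: complex_norm_square[symmetric] cinner_self power_mult_distrib)
  finally have "(norm (scaleC a x))\<^sup>2 = (cmod a * norm x)\<^sup>2"
    by (simp only: of_real_eq_iff)
  then show ?thesis by simp
qed

lemma cinner_eqI: "(\<And>z. cinner z (x::'a::chilbert) = cinner z y) \<Longrightarrow> x = y"
  by (metis cinner_diff_left cinner_diff_right cinner_eq_zero_iff eq_iff_diff_eq_0)

lemma parallelogram_law:
  fixes x y :: "'a::chilbert"
  shows "(norm (x + y))\<^sup>2 + (norm (x - y))\<^sup>2 = 2 * (norm x)\<^sup>2 + 2 * (norm y)\<^sup>2"
proof -
  have "complex_of_real ((norm (x + y))\<^sup>2 + (norm (x - y))\<^sup>2)
      = cinner (x + y) (x + y) + cinner (x - y) (x - y)"
    by (simp add: cinner_self)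
  also have "\<dots> = 2 * cinner x x + 2 * cinner y y"
    by (simp add: cinner_add_left cinner_add_right cinner_diff_left cinner_diff_right)
  also have "\<dots> = complex_of_real (2 * (norm x)\<^sup>2 + 2 * (norm y)\<^sup>2)"
    by (simp add: cinner_self)
  finally show ?thesis by (simp only: of_real_eq_iff)
qed

section \<open>Complex-linear maps and nonnegative forms\<close>

definition clinear :: "('a::chilbert \<Rightarrow> 'b::chilbert) \<Rightarrow> bool" where
  "clinear f \<longleftrightarrow> (\<forall>x y. f (x + y) = f x + f y) \<and> (\<forall>a x. f (scaleC a x) = scaleC a (f x))"

lemma clinear_add: "clinear f \<Longrightarrow> f (x + y) = f x + f y"
  by (simp add: clinear_def)

lemma clinear_scaleC: "clinear f \<Longrightarrow> f (scaleC a x) = scaleC a (f x)"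
  by (simp add: clinear_def)

lemma clinear_0: "clinear f \<Longrightarrow> f 0 = 0"
  using clinear_add[of f 0 0] by simp

lemma clinear_neg: "clinear f \<Longrightarrow> f (- x) = - f x"
  using clinear_scaleC[of f "-1" x] by (simp add: scaleC_minus_one)

lemma clinear_diff: "clinear f \<Longrightarrow> f (x - y) = f x - f y"
  using clinear_add[of f x "-y"] clinear_neg[of f y] by simp

lemma clinear_scaleR: "clinear f \<Longrightarrow> f (scaleR r x) = scaleR r (f x)"
  by (simp add: scaleR_scaleC clinear_scaleC)

lemma clinear_id: "clinear (\<lambda>x. x)"
  by (simp add: clinear_def)

lemma clinear_compose: "clinear f \<Longrightarrow> clinear g \<Longrightarrow> clinear (\<lambda>x. f (g x))"
  by (simp add: clinear_def)

lemma clinear_compose_add: "clinear f \<Longrightarrow> clinear g \<Longrightarrow> clinear (\<lambda>x. f x + g x)"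
  by (simp add: clinear_def scaleC_add_right add_ac)

lemma clinear_compose_scaleR: "clinear f \<Longrightarrow> clinear (\<lambda>x. scaleR r (f x))"
  by (simp add: clinear_def scaleR_scaleC scaleC_add_right scaleC_scaleC mult.commute)

lemma clinear_compose_sub: "clinear f \<Longrightarrow> clinear g \<Longrightarrow> clinear (\<lambda>x. f x - g x)"
  using clinear_compose_add[of f "\<lambda>x. scaleR (-1) (g x)"] clinear_compose_scaleR[of g "-1"]
  by simp

lemma clinear_funpow:
  fixes f :: "'a::chilbert \<Rightarrow> 'a"
  assumes "clinear f"
  shows "clinear (f ^^ k)"
proof (induction k)
  case 0
  show ?case by (simp add: clinear_def)
next
  case (Suc k)
  then show ?case using assms by (simp add: clinear_def)
qed

lemma bounded_clinear_clinear: "bounded_clinear T \<Longrightarrow> clinear T"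
  by (simp add: bounded_clinear_def clinear_def)

lemma bounded_clinearI: "clinear T \<Longrightarrow> (\<And>x. norm (T x) \<le> K * norm x) \<Longrightarrow> bounded_clinear T"
  by (auto simp: bounded_clinear_def clinear_def)

lemma bounded_clinear_pos_bound:
  assumes "bounded_clinear T"
  obtains K where "K > 0" "\<And>x. norm (T x) \<le> K * norm x"
proof -
  from assms obtain K where K: "\<And>x. norm (T x) \<le> K * norm x"
    by (auto simp: bounded_clinear_def)
  have "norm (T x) \<le> max K 1 * norm x" for x
    using K[of x] mult_right_mono[of K "max K 1" "norm x"] by simp
  then show ?thesis
    by (rule that[rotated]) simp
qed

lemma bounded_clinear_bounded_linear:
  assumes "bounded_clinear T"
  shows "bounded_linear T"
proof -
  obtain K where "\<And>x. norm (T x) \<le> K * norm x"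
    using bounded_clinear_pos_bound[OF assms] by blast
  then show ?thesis
    using bounded_clinear_clinear[OF assms]
    by (intro bounded_linear_intro[where K=K]) (simp_all add: clinear_add clinear_scaleR mult.commute)
qed

lemma bounded_clinear_compose:
  assumes "bounded_clinear S" "bounded_clinear T"
  shows "bounded_clinear (\<lambda>x. S (T x))"
proof -
  obtain K where K: "K > 0" "\<And>u. norm (S u) \<le> K * norm u"
    using bounded_clinear_pos_bound[OF assms(1)] by blast
  obtain L where L: "\<And>u. norm (T u) \<le> L * norm u"
    using bounded_clinear_pos_bound[OF assms(2)] by blast
  have "norm (S (T x)) \<le> (K * L) * norm x" for x
  proof -
    have "norm (S (T x)) \<le> K * norm (T x)" by (rule K(2))
    also have "\<dots> \<le> K * (L * norm x)" using K(1) L[of x] by simp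
    finally show ?thesis by (simp add: mult.assoc)
  qed
  then show ?thesis
    using assms by (metis bounded_clinearI clinear_compose bounded_clinear_clinear)
qed

definition nonneg_form :: "('a::chilbert \<Rightarrow> 'a) \<Rightarrow> bool" where
  "nonneg_form S \<longleftrightarrow> (\<forall>x. Im (cinner (S x) x) = 0 \<and> 0 \<le> Re (cinner (S x) x))"

definition selfadjoint :: "('a::chilbert \<Rightarrow> 'a) \<Rightarrow> bool" where
  "selfadjoint S \<longleftrightarrow> (\<forall>x y. cinner (S x) y = cinner x (S y))"

lemma positive_op_iff: "positive_op S \<longleftrightarrow> bounded_clinear S \<and> nonneg_form S"
  by (simp add: positive_op_def nonneg_form_def)

lemma nonneg_formD: "nonneg_form S \<Longrightarrow> 0 \<le> Re (cinner (S x) x)"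
  by (simp add: nonneg_form_def)

lemma nonneg_form_id: "nonneg_form (\<lambda>x::'a::chilbert. x)"
  by (simp add: nonneg_form_def cinner_self)

lemma nonneg_form_add: "nonneg_form S \<Longrightarrow> nonneg_form R \<Longrightarrow> nonneg_form (\<lambda>x. S x + R x)"
  by (simp add: nonneg_form_def cinner_add_left)

lemma nonneg_form_scaleR: "nonneg_form S \<Longrightarrow> 0 \<le> c \<Longrightarrow> nonneg_form (\<lambda>x. scaleR c (S x))"
  by (simp add: nonneg_form_def cinner_scaleR_left)

lemma selfadjoint_if_nonneg_form:
  assumes S: "clinear S" "nonneg_form S"
  shows "selfadjoint S"
  unfolding selfadjoint_def
proof (intro allI)
  fix x y
  define u where "u = cinner (S x) y"
  define v where "v = cinner (S y) x"
  have real: "Im (cinner (S z) z) = 0" for z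
    using S(2) by (simp add: nonneg_form_def)
  have "cinner (S (x + y)) (x + y) = cinner (S x) x + u + v + cinner (S y) y"
    by (simp add: clinear_add[OF S(1)] cinner_add_left cinner_add_right u_def v_def)
  then have im: "Im u + Im v = 0"
    using real[of "x + y"] real[of x] real[of y] by simp
  have "cinner (S (x + scaleC \<i> y)) (x + scaleC \<i> y)
      = cinner (S x) x - \<i> * u + \<i> * v + cinner (S y) y"
    by (simp add: clinear_add[OF S(1)] clinear_scaleC[OF S(1)] cinner_add_left cinner_add_right
        cinner_scaleC_left cinner_scaleC_right u_def v_def algebra_simps)
  then have re: "Re v - Re u = 0"
    using real[of "x + scaleC \<i> y"] real[of x] real[of y] by simp
  have "cinner x (S y) = cnj v"
    by (simp add: v_def cinner_commute[of x])
  also have "\<dots> = u"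
    using im re by (simp add: complex_eq_iff)
  finally show "cinner (S x) y = cinner x (S y)"
    by (simp add: u_def)
qed

lemma positive_op_selfadjoint: "positive_op S \<Longrightarrow> cinner (S x) y = cinner x (S y)"
  using selfadjoint_if_nonneg_form[of S] bounded_clinear_clinear[of S]
  unfolding positive_op_iff selfadjoint_def by blast

lemma selfadjoint_funpow:
  assumes "selfadjoint S"
  shows "selfadjoint (S ^^ k)"
  by (induction k) (use assms in \<open>simp_all add: selfadjoint_def funpow_swap1\<close>)

lemma nonneg_form_funpow:
  assumes S: "clinear S" "nonneg_form S"
  shows "nonneg_form (S ^^ k)"
proof -
  have sa: "selfadjoint (S ^^ m)" for m
    by (rule selfadjoint_funpow[OF selfadjoint_if_nonneg_form[OF S]])
  define m where "m = k div 2"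
  have "k = 2 * m \<or> k = Suc (2 * m)"
    unfolding m_def by presburger
  then show ?thesis
  proof
    assume k: "k = 2 * m"
    have "cinner ((S ^^ k) x) x = cinner ((S ^^ m) x) ((S ^^ m) x)" for x
      using sa[of m] by (simp add: k mult_2 funpow_add selfadjoint_def)
    then show ?thesis by (simp add: nonneg_form_def cinner_self)
  next
    assume k: "k = Suc (2 * m)"
    have "cinner ((S ^^ k) x) x = cinner (S ((S ^^ m) x)) ((S ^^ m) x)" for x
      using sa[of m] by (simp add: k mult_2 funpow_add funpow_swap1 selfadjoint_def)
    then show ?thesis using S(2) by (simp add: nonneg_form_def)
  qed
qed

lemma quadratic_nonneg_imp_discriminant:
  fixes a b q :: real
  assumes "0 \<le> q" "0 \<le> b" "\<And>t. 0 \<le> a - 2 * t * q + t\<^sup>2 * q * b"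
  shows "q \<le> a * b"
proof (cases "q = 0")
  case True
  then show ?thesis using assms(2) assms(3)[of 0] by simp
next
  case False
  with assms(1) have q: "q > 0" by simp
  show ?thesis
  proof (cases "b > 0")
    case True
    have "0 \<le> a - 2 * (1 / b) * q + (1 / b)\<^sup>2 * q * b" by (rule assms(3))
    also have "\<dots> = a - q / b" using True by (simp add: field_simps power2_eq_square)
    finally show ?thesis using True by (simp add: field_simps)
  next
    case False
    with assms(2) have "b = 0" by simp
    then show ?thesis using assms(3)[of "(a + 1) / (2 * q)"] q by simp
  qed
qed

lemma Re_form_sub_scaleC:
  fixes S :: "'a::chilbert \<Rightarrow> 'a" and x y :: 'a and t :: real
  assumes S: "clinear S" "selfadjoint S"
  defines "c \<equiv> cinner (S x) y"
  shows "Re (cinner (S (x - scaleC (complex_of_real t * c) y)) (x - scaleC (complex_of_real t * c) y))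
    = Re (cinner (S x) x) - 2 * t * (cmod c)\<^sup>2 + t\<^sup>2 * (cmod c)\<^sup>2 * Re (cinner (S y) y)"
proof -
  define k where "k = complex_of_real t * c"
  have yx: "cinner (S y) x = cnj c"
    using S(2) by (simp add: selfadjoint_def c_def cinner_commute[of y])
  have cc: "c * cnj c = complex_of_real ((cmod c)\<^sup>2)"
    by (rule complex_norm_square[symmetric])
  have "cinner (S (x - scaleC k y)) (x - scaleC k y)
      = cinner (S x) x - cnj k * c - k * cnj c + k * cnj k * cinner (S y) y"
    by (simp add: clinear_diff[OF S(1)] clinear_scaleC[OF S(1)] cinner_diff_left
        cinner_diff_right cinner_scaleC_left cinner_scaleC_right yx c_def[symmetric] algebra_simps)
  also have "\<dots> = cinner (S x) x - complex_of_real (2 * t * (cmod c)\<^sup>2)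
      + complex_of_real (t\<^sup>2 * (cmod c)\<^sup>2) * cinner (S y) y"
  proof -
    have "cnj k * c = complex_of_real (t * (cmod c)\<^sup>2)" "k * cnj c = complex_of_real (t * (cmod c)\<^sup>2)"
      "k * cnj k = complex_of_real (t\<^sup>2 * (cmod c)\<^sup>2)"
      using cc by (simp_all add: k_def power2_eq_square mult_ac)
    then show ?thesis by simp
  qed
  finally show ?thesis
    by (simp add: k_def)
qed

lemma cauchy_schwarz_form:
  fixes S :: "'a::chilbert \<Rightarrow> 'a"
  assumes S: "clinear S" "nonneg_form S"
  shows "(cmod (cinner (S x) y))\<^sup>2 \<le> Re (cinner (S x) x) * Re (cinner (S y) y)"
proof (rule quadratic_nonneg_imp_discriminant)
  show "0 \<le> Re (cinner (S y) y)" using S(2) by (rule nonneg_formD)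
  fix t :: real
  show "0 \<le> Re (cinner (S x) x) - 2 * t * (cmod (cinner (S x) y))\<^sup>2
      + t\<^sup>2 * (cmod (cinner (S x) y))\<^sup>2 * Re (cinner (S y) y)"
    using nonneg_formD[OF S(2)]
    by (simp add: Re_form_sub_scaleC[OF S(1) selfadjoint_if_nonneg_form[OF S], symmetric])
qed simp

lemma cauchy_schwarz: "cmod (cinner (x::'a::chilbert) y) \<le> norm x * norm y"
proof -
  have "(cmod (cinner x y))\<^sup>2 \<le> (norm x * norm y)\<^sup>2"
    using cauchy_schwarz_form[OF clinear_id nonneg_form_id, of x y]
    by (simp add: Re_cinner_self power_mult_distrib)
  then show ?thesis by (rule power2_le_imp_le) simp
qed

lemma Re_cinner_le_norm: "Re (cinner (x::'a::chilbert) y) \<le> norm x * norm y"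
  using complex_Re_le_cmod cauchy_schwarz order_trans by blast

lemma bounded_linear_cinner_left: "bounded_linear (\<lambda>x::'a::chilbert. cinner x y)"
  by (rule bounded_linear_intro[where K="norm y"])
    (auto simp: cinner_add_left cinner_scaleR_left scaleR_conv_of_real cauchy_schwarz)

lemma bounded_linear_scaleC: "bounded_linear (\<lambda>x::'a::chilbert. scaleC a x)"
  by (rule bounded_linear_intro[where K="cmod a"])
    (auto simp: scaleC_add_right scaleR_scaleC scaleC_scaleC norm_scaleC mult.commute)

lemma form_le_of_norm_le:
  fixes S :: "'a::chilbert \<Rightarrow> 'a"
  assumes "norm (S y) \<le> K * norm y"
  shows "Re (cinner (S y) y) \<le> K * (norm y)\<^sup>2"
proof -
  have "Re (cinner (S y) y) \<le> norm (S y) * norm y"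
    by (rule Re_cinner_le_norm)
  also have "\<dots> \<le> K * (norm y)\<^sup>2"
    using mult_right_mono[OF assms norm_ge_zero] by (simp add: power2_eq_square mult.assoc)
  finally show ?thesis .
qed

lemma nonneg_form_norm_sq_le:
  fixes S :: "'a::chilbert \<Rightarrow> 'a"
  assumes S: "clinear S" "nonneg_form S"
    and bound: "\<And>y. Re (cinner (S y) y) \<le> K * (norm y)\<^sup>2"
  shows "(norm (S x))\<^sup>2 \<le> K * Re (cinner (S x) x)"
proof -
  have "(norm (S x))\<^sup>2 * (norm (S x))\<^sup>2 = (cmod (cinner (S x) (S x)))\<^sup>2"
    by (simp add: cinner_self power2_eq_square norm_mult)
  also have "\<dots> \<le> Re (cinner (S x) x) * Re (cinner (S (S x)) (S x))"
    by (rule cauchy_schwarz_form[OF S])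
  also have "\<dots> \<le> Re (cinner (S x) x) * (K * (norm (S x))\<^sup>2)"
    using bound nonneg_formD[OF S(2)] by (rule mult_left_mono)
  finally have sq: "(norm (S x))\<^sup>2 * (norm (S x))\<^sup>2 \<le> (K * Re (cinner (S x) x)) * (norm (S x))\<^sup>2"
    by (simp add: mult_ac)
  show ?thesis
  proof (cases "S x = 0")
    case False
    then have "0 < (norm (S x))\<^sup>2" by simp
    with sq show ?thesis by (rule mult_right_le_imp_le)
  qed simp
qed

section \<open>Orthogonal projection, Riesz representation and the adjoint\<close>

definition csubspace :: "'a::chilbert set \<Rightarrow> bool" where
  "csubspace M \<longleftrightarrow> 0 \<in> M \<and> (\<forall>u v. u \<in> M \<longrightarrow> v \<in> M \<longrightarrow> u + v \<in> M)
     \<and> (\<forall>a u. u \<in> M \<longrightarrow> scaleC a u \<in> M)"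

lemma csubspace_scaleR: "csubspace M \<Longrightarrow> u \<in> M \<Longrightarrow> scaleR r u \<in> M"
  by (simp add: csubspace_def scaleR_scaleC)

lemma csubspace_range:
  fixes F :: "'a::chilbert \<Rightarrow> 'b::chilbert"
  assumes F: "clinear F"
  shows "csubspace (range F)"
  unfolding csubspace_def
proof (intro conjI allI impI)
  show "0 \<in> range F"
    using clinear_0[OF F] by (metis rangeI)
  show "u + v \<in> range F" if "u \<in> range F" "v \<in> range F" for u v
    using that by (auto simp: clinear_add[OF F, symmetric])
  show "scaleC a u \<in> range F" if "u \<in> range F" for a u
    using that by (auto simp: clinear_scaleC[OF F, symmetric])
qed

lemma Cauchy_if_dist_sq_le:
  fixes f :: "nat \<Rightarrow> 'a::metric_space"
  assumes "g \<longlonglongrightarrow> 0" and dist_le: "\<And>m n. (dist (f m) (f n))\<^sup>2 \<le> g m + g n"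
  shows "Cauchy f"
proof (rule metric_CauchyI)
  fix e :: real
  assume "e > 0"
  then obtain N where N: "\<And>n. n \<ge> N \<Longrightarrow> norm (g n - 0) < e\<^sup>2 / 2"
    using LIMSEQ_D[OF assms(1), of "e\<^sup>2 / 2"] by auto
  have "dist (f m) (f n) < e" if "m \<ge> N" "n \<ge> N" for m n
  proof -
    have "(dist (f m) (f n))\<^sup>2 < e\<^sup>2"
      using dist_le[of m n] N[OF that(1)] N[OF that(2)] by simp
    then show ?thesis using \<open>e > 0\<close> by (simp add: power_less_imp_less_base)
  qed
  then show "\<exists>M. \<forall>m\<ge>M. \<forall>n\<ge>M. dist (f m) (f n) < e" by blast
qed

lemma midpoint_dist_bound:
  fixes x u v :: "'a::chilbert"
  assumes "0 \<le> d" "d \<le> norm (x - scaleR (1/2) (u + v))"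
  shows "(norm (u - v))\<^sup>2 \<le> 2 * (norm (x - u))\<^sup>2 + 2 * (norm (x - v))\<^sup>2 - 4 * d\<^sup>2"
proof -
  have "(x - u) + (x - v) = scaleR 2 (x - scaleR (1/2) (u + v))"
    by (simp add: algebra_simps scaleR_2)
  then have "(norm ((x - u) + (x - v)))\<^sup>2 = 4 * (norm (x - scaleR (1/2) (u + v)))\<^sup>2"
    by (simp add: power_mult_distrib)
  moreover have "(norm ((x - u) - (x - v)))\<^sup>2 = (norm (u - v))\<^sup>2"
    by (simp add: norm_minus_commute)
  moreover have "d\<^sup>2 \<le> (norm (x - scaleR (1/2) (u + v)))\<^sup>2"
    using assms by (intro power_mono) auto
  ultimately show ?thesis
    using parallelogram_law[of "x - u" "x - v"] by linarith
qed

lemma minimizing_sequence_Cauchy: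
  fixes M :: "'a::chilbert set"
  assumes M: "csubspace M" and "0 \<le> d" and d_le: "\<And>v. v \<in> M \<Longrightarrow> d \<le> norm (x - v)"
    and mm: "\<And>n. mm n \<in> M" "\<And>n. norm (x - mm n) < d + 1 / real (Suc n)"
  shows "Cauchy mm"
proof -
  define g where "g n = 2 * (2 * d + 1) / real (Suc n)" for n
  have sq: "2 * (norm (x - mm n))\<^sup>2 \<le> 2 * d\<^sup>2 + g n" for n
  proof -
    have "(norm (x - mm n))\<^sup>2 \<le> (d + 1 / real (Suc n))\<^sup>2"
      using mm(2)[of n] by (intro power_mono) auto
    also have "\<dots> = d\<^sup>2 + 2 * d / real (Suc n) + 1 / real (Suc n) * (1 / real (Suc n))"
      by (simp add: power2_eq_square algebra_simps add_divide_distrib)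
    also have "1 / real (Suc n) * (1 / real (Suc n)) \<le> 1 / real (Suc n)"
      by (intro mult_left_le_one_le) auto
    finally show ?thesis by (simp add: g_def add_divide_distrib)
  qed
  show ?thesis
  proof (rule Cauchy_if_dist_sq_le)
    show "g \<longlonglongrightarrow> 0"
      unfolding g_def using LIMSEQ_Suc[OF lim_const_over_n] by simp
    fix m n
    have "d \<le> norm (x - scaleR (1/2) (mm m + mm n))"
      using M mm(1) by (intro d_le) (simp add: csubspace_def csubspace_scaleR)
    from midpoint_dist_bound[OF \<open>0 \<le> d\<close> this]
    show "(dist (mm m) (mm n))\<^sup>2 \<le> g m + g n"
      using sq[of m] sq[of n] by (simp add: dist_norm)
  qed
qed

lemma closest_point_exists:
  fixes M :: "'a::chilbert set"
  assumes M: "closed M" "csubspace M"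
  obtains m where "m \<in> M" "\<And>v. v \<in> M \<Longrightarrow> norm (x - m) \<le> norm (x - v)"
proof -
  define D where "D = (\<lambda>m. norm (x - m)) ` M"
  define d where "d = Inf D"
  have "D \<noteq> {}" "bdd_below D"
    using M(2) by (auto simp: D_def csubspace_def bdd_below_def intro!: exI[of _ 0])
  have d_le: "d \<le> norm (x - v)" if "v \<in> M" for v
    unfolding d_def by (rule cInf_lower) (use that \<open>bdd_below D\<close> in \<open>auto simp: D_def\<close>)
  have "0 \<le> d"
    unfolding d_def by (rule cInf_greatest[OF \<open>D \<noteq> {}\<close>]) (auto simp: D_def)
  have "\<exists>m\<in>M. norm (x - m) < d + 1 / real (Suc n)" for n
    using cInf_less_iff[OF \<open>D \<noteq> {}\<close> \<open>bdd_below D\<close>, of "d + 1 / real (Suc n)"]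
    by (auto simp: d_def D_def)
  then obtain mm where mm: "\<And>n. mm n \<in> M" "\<And>n. norm (x - mm n) < d + 1 / real (Suc n)"
    by metis
  then obtain m where lim: "mm \<longlonglongrightarrow> m"
    using minimizing_sequence_Cauchy[OF M(2) \<open>0 \<le> d\<close> d_le] Cauchy_convergent_iff convergent_def
    by metis
  have "m \<in> M"
    using closed_sequentially[OF M(1)] mm(1) lim by blast
  moreover have "norm (x - m) \<le> d"
  proof (rule LIMSEQ_le)
    show "(\<lambda>n. norm (x - mm n)) \<longlonglongrightarrow> norm (x - m)"
      by (intro tendsto_intros lim)
    show "(\<lambda>n. d + 1 / real (Suc n)) \<longlonglongrightarrow> d"
      using tendsto_add[OF tendsto_const LIMSEQ_inverse_real_of_nat, of d]
      by (simp add: inverse_eq_divide)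
    show "\<exists>N. \<forall>n\<ge>N. norm (x - mm n) \<le> d + 1 / real (Suc n)"
      using mm(2) less_imp_le by blast
  qed
  ultimately show ?thesis
    using that d_le by force
qed

lemma closest_point_orthogonal:
  fixes M :: "'a::chilbert set"
  assumes M: "csubspace M" and "m \<in> M" and closest: "\<And>v. v \<in> M \<Longrightarrow> norm (x - m) \<le> norm (x - v)"
    and "u \<in> M"
  shows "cinner (x - m) u = 0"
proof -
  define c where "c = cinner (x - m) u"
  have id: "clinear (\<lambda>x::'a. x)" "selfadjoint (\<lambda>x::'a. x)"
    using selfadjoint_if_nonneg_form clinear_id nonneg_form_id by blast+
  have "(cmod c)\<^sup>2 \<le> 0 * (norm u)\<^sup>2"
  proof (rule quadratic_nonneg_imp_discriminant)
    fix t :: real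
    have "m + scaleC (complex_of_real t * c) u \<in> M"
      using M \<open>m \<in> M\<close> \<open>u \<in> M\<close> by (simp add: csubspace_def)
    then have "norm (x - m) \<le> norm ((x - m) - scaleC (complex_of_real t * c) u)"
      using closest by (simp add: diff_diff_eq)
    then have "(norm (x - m))\<^sup>2 \<le> (norm ((x - m) - scaleC (complex_of_real t * c) u))\<^sup>2"
      by (intro power_mono) auto
    moreover have "(norm ((x - m) - scaleC (complex_of_real t * c) u))\<^sup>2
        = (norm (x - m))\<^sup>2 - 2 * t * (cmod c)\<^sup>2 + t\<^sup>2 * (cmod c)\<^sup>2 * (norm u)\<^sup>2"
      using Re_form_sub_scaleC[OF id, where x="x - m" and y=u and t=t]
      by (simp add: Re_cinner_self c_def)
    ultimately show "0 \<le> 0 - 2 * t * (cmod c)\<^sup>2 + t\<^sup>2 * (cmod c)\<^sup>2 * (norm u)\<^sup>2"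
      by linarith
  qed simp_all
  then show ?thesis by (simp add: c_def)
qed

lemma orthogonal_projection_exists:
  fixes M :: "'a::chilbert set"
  assumes "closed M" "csubspace M"
  obtains m where "m \<in> M" "\<And>u. u \<in> M \<Longrightarrow> cinner (x - m) u = 0"
  using closest_point_exists[OF assms] closest_point_orthogonal[OF assms(2)] by metis

theorem riesz_representation:
  fixes f :: "'a::chilbert \<Rightarrow> complex"
  assumes add: "\<And>x y. f (x + y) = f x + f y"
    and scale: "\<And>a x. f (scaleC a x) = a * f x"
    and bound: "\<And>x. cmod (f x) \<le> K * norm x"
  obtains y where "\<And>x. f x = cinner x y"
proof (cases "\<forall>x. f x = 0")
  case True
  then show ?thesis using that[of 0] by simp
next
  case False
  then obtain x0 where "f x0 \<noteq> 0" by blast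
  define N where "N = {x. f x = 0}"
  have "f 0 = 0" using add[of 0 0] by simp
  have "bounded_linear f"
    by (rule bounded_linear_intro[where K=K])
      (auto simp: add scaleR_scaleC scale scaleR_conv_of_real bound mult.commute)
  then have "closed N"
    unfolding N_def by (intro closed_Collect_eq linear_continuous_on continuous_on_const)
  moreover have "csubspace N"
    by (simp add: N_def csubspace_def \<open>f 0 = 0\<close> add scale)
  ultimately obtain m where "m \<in> N" and orth: "\<And>u. u \<in> N \<Longrightarrow> cinner (x0 - m) u = 0"
    using orthogonal_projection_exists[of N x0] by blast
  \<comment> \<open>z is orthogonal to the kernel N, and the representing vector is a multiple of z\<close>
  define z where "z = x0 - m"
  have "f z = f x0"
    using add[of "x0 - m" m] \<open>m \<in> N\<close> by (simp add: z_def N_def)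
  then have "z \<noteq> 0" using \<open>f x0 \<noteq> 0\<close> \<open>f 0 = 0\<close> by auto
  then have zz: "cinner z z \<noteq> 0" by (simp add: cinner_eq_zero_iff)
  have "f x = cinner x (scaleC (cnj (f z / cinner z z)) z)" for x
  proof -
    have "scaleC (f x) z - scaleC (f z) x \<in> N"
      using add[of "scaleC (f x) z" "- scaleC (f z) x"] scale[of "-1"]
      by (simp add: N_def scale scaleC_minus_one)
    then have "cinner (scaleC (f x) z - scaleC (f z) x) z = 0"
      using orth by (subst cinner_commute) (simp add: z_def)
    then have "f x * cinner z z = f z * cinner x z"
      by (simp add: cinner_diff_left cinner_scaleC_left)
    moreover have "cnj (cinner z z) = cinner z z" by (simp add: cinner_self)
    ultimately show ?thesis
      using zz by (simp add: cinner_scaleC_right field_simps)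
  qed
  then show ?thesis by (rule that)
qed

lemma adj_eqI:
  fixes T :: "'a::chilbert \<Rightarrow> 'a"
  assumes "\<And>x y. cinner (T x) y = cinner x (S y)"
  shows "adj T = S"
  unfolding adj_def
proof (rule the_equality)
  show "\<forall>x y. cinner (T x) y = cinner x (S y)" using assms by blast
  fix S' assume "\<forall>x y. cinner (T x) y = cinner x (S' y)"
  then show "S' = S"
    using assms by (intro ext cinner_eqI) metis
qed

lemma cinner_adj_right:
  fixes T :: "'a::chilbert \<Rightarrow> 'a"
  assumes T: "bounded_clinear T"
  shows "cinner (T x) y = cinner x (adj T y)"
proof -
  obtain K where K: "\<And>x. norm (T x) \<le> K * norm x"
    using bounded_clinear_pos_bound[OF T] by blast
  have "\<exists>y'. \<forall>x. cinner (T x) y = cinner x y'" for y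
  proof -
    have "cmod (cinner (T x) y) \<le> (K * norm y) * norm x" for x
      using cauchy_schwarz[of "T x" y] mult_right_mono[OF K[of x], of "norm y"]
      by (simp add: mult_ac)
    moreover have "cinner (T (x + x')) y = cinner (T x) y + cinner (T x') y"
      "cinner (T (scaleC a x)) y = a * cinner (T x) y" for x x' a
      using bounded_clinear_clinear[OF T]
      by (simp_all add: clinear_add clinear_scaleC cinner_add_left cinner_scaleC_left)
    ultimately show ?thesis
      using riesz_representation[of "\<lambda>x. cinner (T x) y"] by metis
  qed
  then obtain S where "\<And>x y. cinner (T x) y = cinner x (S y)"
    by metis
  then show ?thesis using adj_eqI[of T S] by simp
qed

lemma bounded_clinear_adj:
  fixes T :: "'a::chilbert \<Rightarrow> 'a"
  assumes T: "bounded_clinear T"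
  shows "bounded_clinear (adj T)"
proof -
  obtain K where K: "K > 0" "\<And>x. norm (T x) \<le> K * norm x"
    using bounded_clinear_pos_bound[OF T] by blast
  show ?thesis
  proof (rule bounded_clinearI[where K=K])
    show "clinear (adj T)"
      unfolding clinear_def
    proof (intro conjI allI)
      fix y1 y2 a y
      show "adj T (y1 + y2) = adj T y1 + adj T y2"
        by (rule cinner_eqI) (simp add: cinner_adj_right[OF T, symmetric] cinner_add_right)
      show "adj T (scaleC a y) = scaleC a (adj T y)"
        by (rule cinner_eqI) (simp add: cinner_adj_right[OF T, symmetric] cinner_scaleC_right)
    qed
    fix y
    have "(norm (adj T y))\<^sup>2 = Re (cinner (T (adj T y)) y)"
      by (simp add: cinner_adj_right[OF T] Re_cinner_self)
    also have "\<dots> \<le> norm (T (adj T y)) * norm y"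
      by (rule Re_cinner_le_norm)
    also have "\<dots> \<le> K * norm (adj T y) * norm y"
      using K(2) by (simp add: mult_right_mono)
    finally have "norm (adj T y) * norm (adj T y) \<le> norm (adj T y) * (K * norm y)"
      by (simp add: power2_eq_square mult_ac)
    then show "norm (adj T y) \<le> K * norm y"
      using K(1) by (cases "adj T y = 0") auto
  qed
qed

lemma adj_adj:
  fixes T :: "'a::chilbert \<Rightarrow> 'a"
  assumes "bounded_clinear T"
  shows "adj (adj T) = T"
proof (rule adj_eqI)
  fix x y
  have "cinner (adj T x) y = cnj (cinner (T y) x)"
    by (simp add: cinner_commute[of "adj T x"] cinner_adj_right[OF assms])
  then show "cinner (adj T x) y = cinner x (T y)"
    by (simp add: cinner_commute[of x])
qed

section \<open>Square roots of positive operators\<close>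

text \<open>Polynomials in Q with nonnegative coefficients are positive when Q is, and any two of them
  commute; all iterates below are of this form.\<close>

inductive nonneg_poly :: "('a::chilbert \<Rightarrow> 'a) \<Rightarrow> ('a \<Rightarrow> 'a) \<Rightarrow> bool" for Q where
  nonneg_poly_0: "nonneg_poly Q (\<lambda>x. 0)"
| nonneg_poly_add_monom: "nonneg_poly Q S \<Longrightarrow> 0 \<le> c \<Longrightarrow> nonneg_poly Q (\<lambda>x. S x + scaleR c ((Q ^^ k) x))"

lemma nonneg_poly_clinear:
  assumes Q: "clinear Q" and "nonneg_poly Q S"
  shows "clinear S"
  using assms(2)
proof (induction rule: nonneg_poly.induct)
  case nonneg_poly_0
  then show ?case by (simp add: clinear_def)
next
  case (nonneg_poly_add_monom S c k)
  then show ?case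
    by (intro clinear_compose_add clinear_compose_scaleR clinear_funpow Q)
qed

lemma nonneg_poly_nonneg_form:
  assumes Q: "clinear Q" "nonneg_form Q" and "nonneg_poly Q S"
  shows "nonneg_form S"
  using assms(3)
proof (induction rule: nonneg_poly.induct)
  case nonneg_poly_0
  then show ?case by (simp add: nonneg_form_def)
next
  case (nonneg_poly_add_monom S c k)
  then show ?case
    by (intro nonneg_form_add nonneg_form_scaleR nonneg_form_funpow Q)
qed

lemma nonneg_poly_add: "nonneg_poly Q R \<Longrightarrow> nonneg_poly Q S \<Longrightarrow> nonneg_poly Q (\<lambda>x. S x + R x)"
proof (induction rule: nonneg_poly.induct)
  case nonneg_poly_0
  then show ?case by simp
next
  case (nonneg_poly_add_monom R c k)
  have "nonneg_poly Q (\<lambda>x. (S x + R x) + scaleR c ((Q ^^ k) x))"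
    using nonneg_poly_add_monom by (intro nonneg_poly.nonneg_poly_add_monom) auto
  then show ?case by (simp add: add.assoc)
qed

lemma nonneg_poly_scaleR: "nonneg_poly Q S \<Longrightarrow> 0 \<le> c \<Longrightarrow> nonneg_poly Q (\<lambda>x. scaleR c (S x))"
proof (induction rule: nonneg_poly.induct)
  case nonneg_poly_0
  then show ?case by (simp add: nonneg_poly.nonneg_poly_0)
next
  case (nonneg_poly_add_monom S d k)
  have "nonneg_poly Q (\<lambda>x. scaleR c (S x) + scaleR (c * d) ((Q ^^ k) x))"
    using nonneg_poly_add_monom by (intro nonneg_poly.nonneg_poly_add_monom) auto
  then show ?case by (simp add: scaleR_add_right)
qed

lemma nonneg_poly_compose_funpow: "nonneg_poly Q S \<Longrightarrow> nonneg_poly Q (\<lambda>x. S ((Q ^^ k) x))"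
proof (induction rule: nonneg_poly.induct)
  case nonneg_poly_0
  then show ?case by (simp add: nonneg_poly.nonneg_poly_0)
next
  case (nonneg_poly_add_monom S c j)
  have "nonneg_poly Q (\<lambda>x. S ((Q ^^ k) x) + scaleR c ((Q ^^ (j + k)) x))"
    using nonneg_poly_add_monom by (intro nonneg_poly.nonneg_poly_add_monom) auto
  then show ?case by (simp add: funpow_add)
qed

lemma nonneg_poly_compose:
  assumes Q: "clinear Q" and S: "nonneg_poly Q S" and R: "nonneg_poly Q R"
  shows "nonneg_poly Q (\<lambda>x. S (R x))"
  using R
proof (induction rule: nonneg_poly.induct)
  case nonneg_poly_0
  then show ?case
    using clinear_0[OF nonneg_poly_clinear[OF Q S]] by (simp add: nonneg_poly.nonneg_poly_0)
next
  case (nonneg_poly_add_monom R c k)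
  have "nonneg_poly Q (\<lambda>x. S (R x) + scaleR c (S ((Q ^^ k) x)))"
    by (intro nonneg_poly_add nonneg_poly_add_monom nonneg_poly_scaleR nonneg_poly_compose_funpow S)
  then show ?case
    by (simp add: clinear_add[OF nonneg_poly_clinear[OF Q S]] clinear_scaleR[OF nonneg_poly_clinear[OF Q S]])
qed

lemma nonneg_poly_commute_funpow:
  assumes Q: "clinear Q" and "nonneg_poly Q S"
  shows "S ((Q ^^ k) x) = (Q ^^ k) (S x)"
  using assms(2)
proof (induction arbitrary: x rule: nonneg_poly.induct)
  case nonneg_poly_0
  then show ?case using clinear_0[OF clinear_funpow[OF Q]] by simp
next
  case (nonneg_poly_add_monom S c j)
  have "(Q ^^ j) ((Q ^^ k) x) = (Q ^^ k) ((Q ^^ j) x)"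
    by (metis add.commute comp_apply funpow_add)
  then show ?case
    using nonneg_poly_add_monom.IH
    by (simp add: clinear_add[OF clinear_funpow[OF Q]] clinear_scaleR[OF clinear_funpow[OF Q]])
qed

lemma nonneg_poly_commute:
  assumes Q: "clinear Q" and S: "nonneg_poly Q S" and R: "nonneg_poly Q R"
  shows "S (R x) = R (S x)"
  using R
proof (induction arbitrary: x rule: nonneg_poly.induct)
  case nonneg_poly_0
  then show ?case using clinear_0[OF nonneg_poly_clinear[OF Q S]] by simp
next
  case (nonneg_poly_add_monom R d k)
  then show ?case
    by (simp add: clinear_add[OF nonneg_poly_clinear[OF Q S]] clinear_scaleR[OF nonneg_poly_clinear[OF Q S]]
        nonneg_poly_commute_funpow[OF Q S])
qed

definition positive_contraction :: "('a::chilbert \<Rightarrow> 'a) \<Rightarrow> bool" where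
  "positive_contraction Q \<longleftrightarrow> clinear Q \<and> nonneg_form Q \<and> (\<forall>x. Re (cinner (Q x) x) \<le> (norm x)\<^sup>2)"

lemma positive_contraction_norm_le:
  assumes "positive_contraction Q"
  shows "norm (Q x) \<le> norm x"
proof -
  have "(norm (Q x))\<^sup>2 \<le> 1 * Re (cinner (Q x) x)"
    using assms by (intro nonneg_form_norm_sq_le) (auto simp: positive_contraction_def)
  also have "\<dots> \<le> (norm x)\<^sup>2"
    using assms by (simp add: positive_contraction_def)
  finally show ?thesis by (rule power2_le_imp_le) simp
qed

text \<open>Starting from 0, the iteration Y \<mapsto> (Q + Y^2) / 2 increases to the solution
  Y = I - (I - Q)^(1/2) of Y = (Q + Y^2) / 2.\<close>

fun sqrt_iter :: "('a::chilbert \<Rightarrow> 'a) \<Rightarrow> nat \<Rightarrow> 'a \<Rightarrow> 'a" where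
  "sqrt_iter Q 0 = (\<lambda>x. 0)"
| "sqrt_iter Q (Suc n) = (\<lambda>x. scaleR (1/2) (Q x + sqrt_iter Q n (sqrt_iter Q n x)))"

lemma sqrt_iter_nonneg_poly:
  assumes Q: "clinear Q"
  shows "nonneg_poly Q (sqrt_iter Q n) \<and> nonneg_poly Q (\<lambda>x. sqrt_iter Q (Suc n) x - sqrt_iter Q n x)"
proof (induction n)
  case 0
  have "nonneg_poly Q (\<lambda>x. 0 + scaleR (1/2) ((Q ^^ 1) x))"
    by (intro nonneg_poly_add_monom nonneg_poly_0) auto
  then show ?case by (simp add: nonneg_poly_0)
next
  case (Suc n)
  define Y where "Y = sqrt_iter Q n"
  define Y' where "Y' = sqrt_iter Q (Suc n)"
  define D where "D = (\<lambda>x. Y' x - Y x)"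
  have Y: "nonneg_poly Q Y" and D: "nonneg_poly Q D"
    using Suc by (auto simp: Y_def D_def Y'_def)
  have "Y' = (\<lambda>x. Y x + D x)" by (simp add: D_def)
  then have Y': "nonneg_poly Q Y'" using nonneg_poly_add[OF D Y] by simp
  \<comment> \<open>Y(n+2) - Y(n+1) = (Y(n+1) - Y(n)) (Y(n+1) + Y(n)) / 2, because polynomials in Q commute\<close>
  have "sqrt_iter Q (Suc (Suc n)) x - sqrt_iter Q (Suc n) x = scaleR (1/2) (D (Y' x + Y x))" for x
  proof -
    have "D (Y' x + Y x) = Y' (Y' x) - Y (Y x)"
      using nonneg_poly_commute[OF Q Y' Y, of x] nonneg_poly_clinear[OF Q Y] nonneg_poly_clinear[OF Q Y']
      by (simp add: D_def clinear_add algebra_simps)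
    moreover have "sqrt_iter Q (Suc (Suc n)) x - sqrt_iter Q (Suc n) x
        = scaleR (1/2) (Y' (Y' x) - Y (Y x))"
      by (simp only: sqrt_iter.simps(2)[of Q "Suc n"] Y'_def) (simp add: Y_def algebra_simps)
    ultimately show ?thesis by simp
  qed
  moreover have "nonneg_poly Q (\<lambda>x. scaleR (1/2) (D (Y' x + Y x)))"
    by (intro nonneg_poly_scaleR nonneg_poly_compose[OF Q D] nonneg_poly_add Y Y') simp
  ultimately show ?case using Y' by (simp add: Y'_def)
qed

lemma sqrt_iter_clinear: "clinear Q \<Longrightarrow> clinear (sqrt_iter Q n)"
  using sqrt_iter_nonneg_poly nonneg_poly_clinear by blast

lemma sqrt_iter_norm_le:
  assumes "positive_contraction Q"
  shows "norm (sqrt_iter Q n x) \<le> norm x"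
proof (induction n arbitrary: x)
  case 0
  then show ?case by simp
next
  case (Suc n)
  have "norm (sqrt_iter Q (Suc n) x) \<le> (1/2) * (norm (Q x) + norm (sqrt_iter Q n (sqrt_iter Q n x)))"
    using norm_triangle_ineq[of "Q x"] by simp
  also have "\<dots> \<le> (1/2) * (norm x + norm x)"
    using positive_contraction_norm_le[OF assms, of x] Suc[of "sqrt_iter Q n x"] Suc[of x] by simp
  finally show ?case by simp
qed

lemma sqrt_iter_mono:
  assumes Q: "clinear Q" "nonneg_form Q" and "n \<le> m"
  shows "nonneg_form (\<lambda>x. sqrt_iter Q m x - sqrt_iter Q n x)"
proof -
  obtain k where m: "m = n + k" using \<open>n \<le> m\<close> le_Suc_ex by blast
  have "nonneg_form (\<lambda>x. sqrt_iter Q (n + k) x - sqrt_iter Q n x)"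
  proof (induction k)
    case 0
    then show ?case by (simp add: nonneg_form_def)
  next
    case (Suc k)
    have "nonneg_form (\<lambda>x. sqrt_iter Q (Suc (n + k)) x - sqrt_iter Q (n + k) x)"
      using nonneg_poly_nonneg_form[OF Q] sqrt_iter_nonneg_poly[OF Q(1)] by blast
    from nonneg_form_add[OF Suc this] show ?case by simp
  qed
  then show ?thesis by (simp add: m)
qed

lemma sqrt_iter_form_le:
  assumes "positive_contraction Q"
  shows "Re (cinner (sqrt_iter Q n x) x) \<le> (norm x)\<^sup>2"
  using form_le_of_norm_le[of "sqrt_iter Q n" x 1] sqrt_iter_norm_le[OF assms] by simp

lemma sqrt_iter_dist_sq_le:
  assumes Q: "positive_contraction Q" and "n \<le> m"
  shows "(norm (sqrt_iter Q m x - sqrt_iter Q n x))\<^sup>2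
    \<le> Re (cinner (sqrt_iter Q m x) x) - Re (cinner (sqrt_iter Q n x) x)"
proof -
  have cQ: "clinear Q" "nonneg_form Q" using Q by (auto simp: positive_contraction_def)
  define D where "D = (\<lambda>x. sqrt_iter Q m x - sqrt_iter Q n x)"
  have D: "clinear D" "nonneg_form D"
    unfolding D_def using sqrt_iter_mono[OF cQ \<open>n \<le> m\<close>]
    by (auto intro: clinear_compose_sub sqrt_iter_clinear cQ)
  have "Re (cinner (D y) y) \<le> 1 * (norm y)\<^sup>2" for y
    using sqrt_iter_form_le[OF Q, of m y] sqrt_iter_nonneg_poly[OF cQ(1), of n]
      nonneg_formD[OF nonneg_poly_nonneg_form[OF cQ], of "sqrt_iter Q n" y]
    by (simp add: D_def cinner_diff_left)
  from nonneg_form_norm_sq_le[OF D this] show ?thesis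
    by (simp add: D_def cinner_diff_left)
qed

lemma sqrt_iter_Cauchy:
  assumes Q: "positive_contraction Q"
  shows "Cauchy (\<lambda>n. sqrt_iter Q n x)"
proof -
  define r where "r n = Re (cinner (sqrt_iter Q n x) x)" for n
  have dist_le: "(norm (sqrt_iter Q m x - sqrt_iter Q n x))\<^sup>2 \<le> r m - r n" if "n \<le> m" for m n
    unfolding r_def using Q that by (rule sqrt_iter_dist_sq_le)
  have "incseq r"
  proof (rule incseq_SucI)
    fix n
    show "r n \<le> r (Suc n)"
      using dist_le[of n "Suc n"] zero_le_power2[of "norm (sqrt_iter Q (Suc n) x - sqrt_iter Q n x)"]
      by linarith
  qed
  moreover have "r n \<le> (norm x)\<^sup>2" for n
    unfolding r_def using Q by (rule sqrt_iter_form_le)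
  ultimately obtain L where L: "r \<longlonglongrightarrow> L"
    using incseq_convergent by blast
  have r_le: "r n \<le> L" for n
    using incseq_le[OF \<open>incseq r\<close> L] by blast
  show ?thesis
  proof (rule Cauchy_if_dist_sq_le)
    show "(\<lambda>n. L - r n) \<longlonglongrightarrow> 0"
      using tendsto_diff[OF tendsto_const L, of L] by simp
    fix m n
    show "(dist (sqrt_iter Q m x) (sqrt_iter Q n x))\<^sup>2 \<le> (L - r m) + (L - r n)"
      using dist_le[of n m] dist_le[of m n] r_le[of m] r_le[of n]
      by (cases "n \<le> m") (auto simp: dist_norm norm_minus_commute)
  qed
qed

definition sqrt_lim :: "('a::chilbert \<Rightarrow> 'a) \<Rightarrow> 'a \<Rightarrow> 'a" where
  "sqrt_lim Q x = lim (\<lambda>n. sqrt_iter Q n x)"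

lemma LIMSEQ_sqrt_iter: "positive_contraction Q \<Longrightarrow> (\<lambda>n. sqrt_iter Q n x) \<longlonglongrightarrow> sqrt_lim Q x"
  unfolding sqrt_lim_def using sqrt_iter_Cauchy Cauchy_convergent_iff convergent_LIMSEQ_iff by blast

lemma sqrt_lim_clinear:
  assumes Q: "positive_contraction Q"
  shows "clinear (sqrt_lim Q)"
proof -
  have Y: "clinear (sqrt_iter Q n)" for n
    using Q sqrt_iter_clinear by (auto simp: positive_contraction_def)
  have "(\<lambda>n. sqrt_iter Q n (x + y)) \<longlonglongrightarrow> sqrt_lim Q x + sqrt_lim Q y" for x y
    using tendsto_add[OF LIMSEQ_sqrt_iter[OF Q, of x] LIMSEQ_sqrt_iter[OF Q, of y]]
    by (simp add: clinear_add[OF Y])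
  moreover have "(\<lambda>n. sqrt_iter Q n (scaleC a x)) \<longlonglongrightarrow> scaleC a (sqrt_lim Q x)" for a x
    using bounded_linear.tendsto[OF bounded_linear_scaleC LIMSEQ_sqrt_iter[OF Q, of x]]
    by (simp add: clinear_scaleC[OF Y])
  ultimately show ?thesis
    unfolding clinear_def using LIMSEQ_unique LIMSEQ_sqrt_iter[OF Q] by blast
qed

lemma sqrt_lim_norm_le: "positive_contraction Q \<Longrightarrow> norm (sqrt_lim Q x) \<le> norm x"
  by (rule LIMSEQ_le_const2[OF tendsto_norm[OF LIMSEQ_sqrt_iter]]) (auto intro: sqrt_iter_norm_le)

lemma sqrt_lim_nonneg_form:
  assumes Q: "positive_contraction Q"
  shows "nonneg_form (sqrt_lim Q)"
  unfolding nonneg_form_def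
proof (intro allI conjI)
  fix x
  have cQ: "clinear Q" "nonneg_form Q" using Q by (auto simp: positive_contraction_def)
  have lim: "(\<lambda>n. cinner (sqrt_iter Q n x) x) \<longlonglongrightarrow> cinner (sqrt_lim Q x) x"
    by (rule bounded_linear.tendsto[OF bounded_linear_cinner_left LIMSEQ_sqrt_iter[OF Q]])
  have Y: "nonneg_form (sqrt_iter Q n)" for n
    using nonneg_poly_nonneg_form[OF cQ] sqrt_iter_nonneg_poly[OF cQ(1)] by blast
  show "Im (cinner (sqrt_lim Q x) x) = 0"
    using tendsto_Im[OF lim] Y by (simp add: nonneg_form_def LIMSEQ_const_iff)
  show "0 \<le> Re (cinner (sqrt_lim Q x) x)"
    using tendsto_Re[OF lim] by (rule LIMSEQ_le_const) (use Y in \<open>auto simp: nonneg_form_def\<close>)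
qed

lemma sqrt_lim_fixpoint:
  assumes Q: "positive_contraction Q"
  shows "sqrt_lim Q x = scaleR (1/2) (Q x + sqrt_lim Q (sqrt_lim Q x))"
proof -
  define Y where "Y = sqrt_lim Q"
  have lim: "\<And>y. (\<lambda>n. sqrt_iter Q n y) \<longlonglongrightarrow> Y y"
    unfolding Y_def by (rule LIMSEQ_sqrt_iter[OF Q])
  have clin: "clinear (sqrt_iter Q n)" for n
    using Q sqrt_iter_clinear by (auto simp: positive_contraction_def)
  \<comment> \<open>the iterates are uniformly bounded, so they converge jointly in both positions\<close>
  have "(\<lambda>n. sqrt_iter Q n (sqrt_iter Q n x - Y x)) \<longlonglongrightarrow> 0"
  proof (rule Lim_null_comparison)
    show "\<forall>\<^sub>F n in sequentially. norm (sqrt_iter Q n (sqrt_iter Q n x - Y x)) \<le> norm (sqrt_iter Q n x - Y x)"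
      using sqrt_iter_norm_le[OF Q] by simp
    show "(\<lambda>n. norm (sqrt_iter Q n x - Y x)) \<longlonglongrightarrow> 0"
      using lim[of x] by (simp add: tendsto_norm_zero_iff LIM_zero_iff)
  qed
  from tendsto_add[OF this lim[of "Y x"]]
  have "(\<lambda>n. sqrt_iter Q n (sqrt_iter Q n x)) \<longlonglongrightarrow> Y (Y x)"
    by (simp add: clinear_diff[OF clin])
  then have "(\<lambda>n. sqrt_iter Q (Suc n) x) \<longlonglongrightarrow> scaleR (1/2) (Q x + Y (Y x))"
    by (simp add: tendsto_intros)
  then have "(\<lambda>n. sqrt_iter Q n x) \<longlonglongrightarrow> scaleR (1/2) (Q x + Y (Y x))"
    by (rule LIMSEQ_imp_Suc)
  then show ?thesis
    using lim[of x] LIMSEQ_unique unfolding Y_def by blast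
qed

lemma sqrt_lim_intertwine:
  assumes C: "bounded_clinear C" and Q1: "positive_contraction Q1" and Q2: "positive_contraction Q2"
    and intertwine: "\<And>x. C (Q1 x) = Q2 (C x)"
  shows "C (sqrt_lim Q1 x) = sqrt_lim Q2 (C x)"
proof -
  have "C (sqrt_iter Q1 n y) = sqrt_iter Q2 n (C y)" for n y
    using bounded_clinear_clinear[OF C]
    by (induction n arbitrary: y) (simp_all add: clinear_0 clinear_add clinear_scaleR intertwine)
  then have "(\<lambda>n. sqrt_iter Q2 n (C x)) \<longlonglongrightarrow> C (sqrt_lim Q1 x)"
    using bounded_linear.tendsto[OF bounded_clinear_bounded_linear[OF C] LIMSEQ_sqrt_iter[OF Q1]]
    by simp
  then show ?thesis
    using LIMSEQ_sqrt_iter[OF Q2] LIMSEQ_unique by blast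
qed

definition form_bounded :: "real \<Rightarrow> ('a::chilbert \<Rightarrow> 'a) \<Rightarrow> bool" where
  "form_bounded c P \<longleftrightarrow> 0 < c \<and> (\<forall>x. Re (cinner (P x) x) \<le> c * (norm x)\<^sup>2)"

lemma form_bounded_exists:
  assumes "positive_op P"
  obtains c where "form_bounded c P"
proof -
  obtain K where "K > 0" "\<And>x. norm (P x) \<le> K * norm x"
    using assms bounded_clinear_pos_bound by (auto simp: positive_op_iff)
  then have "form_bounded K P"
    using form_le_of_norm_le by (auto simp: form_bounded_def)
  then show ?thesis by (rule that)
qed

lemma form_bounded_mono:
  assumes "form_bounded c P" "c \<le> d"
  shows "form_bounded d P"
proof -
  have "c * (norm x)\<^sup>2 \<le> d * (norm x)\<^sup>2" for x :: 'a
    using assms(2) by (simp add: mult_right_mono)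
  then show ?thesis
    using assms unfolding form_bounded_def by (auto intro: order_trans)
qed

lemma positive_contraction_shift:
  assumes P: "positive_op P" and c: "form_bounded c P"
  shows "positive_contraction (\<lambda>y. y - scaleR (1/c) (P y))"
proof -
  have P': "bounded_clinear P" "nonneg_form P" using P by (auto simp: positive_op_iff)
  have "c > 0" and bound: "\<And>x. Re (cinner (P x) x) \<le> c * (norm x)\<^sup>2"
    using c by (auto simp: form_bounded_def)
  have eq: "cinner (y - scaleR (1/c) (P y)) y = cinner y y - complex_of_real (1/c) * cinner (P y) y" for y
    by (simp add: cinner_diff_left cinner_scaleR_left)
  have "clinear (\<lambda>y. y - scaleR (1/c) (P y))"
    using P'(1) by (intro clinear_compose_sub clinear_id clinear_compose_scaleR bounded_clinear_clinear)
  moreover have "Re (cinner (P y) y) / c \<le> (norm y)\<^sup>2" for y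
    using bound[of y] \<open>c > 0\<close> by (simp add: divide_le_eq mult.commute)
  ultimately show ?thesis
    using P'(2) \<open>c > 0\<close>
    by (simp add: positive_contraction_def nonneg_form_def eq Re_cinner_self cinner_self)
qed

text \<open>If 0 \<le> P \<le> c I, then Q = I - P/c is a positive contraction, and sqrt c (I - Y) with
  Y = I - (I - Q)^(1/2) = I - (P/c)^(1/2) is the square root of P.\<close>

definition scaled_sqrt :: "real \<Rightarrow> ('a::chilbert \<Rightarrow> 'a) \<Rightarrow> 'a \<Rightarrow> 'a" where
  "scaled_sqrt c P = (\<lambda>x. scaleR (sqrt c) (x - sqrt_lim (\<lambda>y. y - scaleR (1/c) (P y)) x))"

lemma scaled_sqrt_square:
  assumes P: "positive_op P" and c: "form_bounded c P"
  shows "scaled_sqrt c P (scaled_sqrt c P x) = P x"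
proof -
  define Q where "Q = (\<lambda>y. y - scaleR (1/c) (P y))"
  define Y where "Y = sqrt_lim Q"
  have Q: "positive_contraction Q"
    unfolding Q_def by (rule positive_contraction_shift[OF P c])
  have Y: "clinear Y"
    unfolding Y_def by (rule sqrt_lim_clinear[OF Q])
  have "c > 0" using c by (simp add: form_bounded_def)
  have "scaleR 2 (Y x) = Q x + Y (Y x)"
    using arg_cong[OF sqrt_lim_fixpoint[OF Q, of x], of "scaleR 2"] by (simp add: Y_def)
  then have YY: "Y (Y x) = scaleR 2 (Y x) - Q x"
    by (simp add: algebra_simps)
  have "scaled_sqrt c P (scaled_sqrt c P x)
      = scaleR (sqrt c * sqrt c) (x - Y x - (Y x - Y (Y x)))"
    by (simp add: scaled_sqrt_def Q_def[symmetric] Y_def[symmetric] clinear_scaleR[OF Y]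
        clinear_diff[OF Y] algebra_simps)
  also have "\<dots> = scaleR c (x - Q x)"
    using \<open>c > 0\<close> by (simp add: YY algebra_simps scaleR_2)
  also have "\<dots> = P x"
    using \<open>c > 0\<close> by (simp add: Q_def)
  finally show ?thesis .
qed

lemma positive_op_scaled_sqrt:
  assumes P: "positive_op P" and c: "form_bounded c P"
  shows "positive_op (scaled_sqrt c P)"
proof -
  define Q where "Q = (\<lambda>y. y - scaleR (1/c) (P y))"
  define Y where "Y = sqrt_lim Q"
  have Q: "positive_contraction Q"
    unfolding Q_def by (rule positive_contraction_shift[OF P c])
  have Y: "clinear Y" "nonneg_form Y" "\<And>x. norm (Y x) \<le> norm x"
    unfolding Y_def using sqrt_lim_clinear sqrt_lim_nonneg_form sqrt_lim_norm_le Q by blast+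
  have "c > 0" using c by (simp add: form_bounded_def)
  have S: "scaled_sqrt c P = (\<lambda>x. scaleR (sqrt c) (x - Y x))"
    by (simp add: scaled_sqrt_def Q_def Y_def)
  have "norm (scaled_sqrt c P x) \<le> (2 * sqrt c) * norm x" for x
  proof -
    have "norm (scaled_sqrt c P x) \<le> sqrt c * (norm x + norm (Y x))"
      using \<open>c > 0\<close> norm_triangle_ineq4[of x "Y x"] by (simp add: S)
    also have "\<dots> \<le> sqrt c * (norm x + norm x)"
      using Y(3)[of x] \<open>c > 0\<close> by simp
    finally show ?thesis by simp
  qed
  moreover have "clinear (scaled_sqrt c P)"
    unfolding S by (intro clinear_compose_scaleR clinear_compose_sub clinear_id Y)
  moreover have "nonneg_form (scaled_sqrt c P)"
  proof -
    have "Re (cinner (Y x) x) \<le> (norm x)\<^sup>2" for x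
      using form_le_of_norm_le[of Y x 1] Y(3) by simp
    then show ?thesis
      using Y(2) \<open>c > 0\<close>
      by (simp add: nonneg_form_def S cinner_scaleR_left cinner_diff_left Re_cinner_self cinner_self)
  qed
  ultimately show ?thesis
    by (auto simp: positive_op_iff intro: bounded_clinearI)
qed

lemma scaled_sqrt_intertwine:
  assumes P1: "positive_op P1" "form_bounded c P1" and P2: "positive_op P2" "form_bounded c P2"
    and C: "bounded_clinear C" and intertwine: "\<And>x. C (P1 x) = P2 (C x)"
  shows "C (scaled_sqrt c P1 x) = scaled_sqrt c P2 (C x)"
proof -
  have clin: "clinear C" by (rule bounded_clinear_clinear[OF C])
  have "C (sqrt_lim (\<lambda>y. y - scaleR (1/c) (P1 y)) x) = sqrt_lim (\<lambda>y. y - scaleR (1/c) (P2 y)) (C x)"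
    by (rule sqrt_lim_intertwine[OF C positive_contraction_shift[OF P1] positive_contraction_shift[OF P2]])
      (simp add: clinear_diff[OF clin] clinear_scaleR[OF clin] intertwine)
  then show ?thesis
    by (simp add: scaled_sqrt_def clinear_diff[OF clin] clinear_scaleR[OF clin])
qed

lemma positive_op_form_eq_0_imp:
  assumes S: "positive_op S" and "Re (cinner (S y) y) = 0"
  shows "S y = 0"
proof -
  obtain K where K: "K > 0" "\<And>u. norm (S u) \<le> K * norm u"
    using S bounded_clinear_pos_bound by (auto simp: positive_op_iff)
  have "(norm (S y))\<^sup>2 \<le> K * Re (cinner (S y) y)"
    using S K form_le_of_norm_le
    by (intro nonneg_form_norm_sq_le) (auto simp: positive_op_iff bounded_clinear_clinear)
  then show ?thesis using assms(2) by simp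
qed

lemma positive_sqrt_unique:
  assumes P: "positive_op P" "form_bounded c P"
    and R: "positive_op R" and square: "\<And>x. R (R x) = P x"
  shows "R = scaled_sqrt c P"
proof
  fix x
  define S where "S = scaled_sqrt c P"
  have S: "positive_op S"
    unfolding S_def by (rule positive_op_scaled_sqrt[OF P])
  have clin: "clinear S" "clinear R"
    using S R by (auto simp: positive_op_iff bounded_clinear_clinear)
  have SS: "S (S u) = P u" for u
    unfolding S_def by (rule scaled_sqrt_square[OF P])
  have "bounded_clinear R" using R by (simp add: positive_op_iff)
  then have comm: "R (S u) = S (R u)" for u
    unfolding S_def by (rule scaled_sqrt_intertwine[OF P P]) (simp add: square[symmetric])
  define y where "y = S x - R x"
  have "S y + R y = 0"
    by (simp add: y_def clinear_diff[OF clin(1)] clinear_diff[OF clin(2)] SS square comm)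
  then have "cinner (S y) y + cinner (R y) y = 0"
    by (simp add: cinner_add_left[symmetric])
  then have "Re (cinner (S y) y) + Re (cinner (R y) y) = 0"
    by (simp add: complex_eq_iff)
  moreover have "0 \<le> Re (cinner (S y) y)" "0 \<le> Re (cinner (R y) y)"
    using S R by (auto simp: positive_op_iff nonneg_formD)
  ultimately have "S y = 0" "R y = 0"
    using positive_op_form_eq_0_imp[OF S] positive_op_form_eq_0_imp[OF R] by auto
  then have "cinner y y = 0"
    by (simp add: y_def cinner_diff_left positive_op_selfadjoint[OF S] positive_op_selfadjoint[OF R])
  then show "R x = scaled_sqrt c P x"
    by (simp add: cinner_eq_zero_iff y_def S_def)
qed

lemma op_sqrt_eq_scaled_sqrt:
  assumes "positive_op P" "form_bounded c P"
  shows "op_sqrt P = scaled_sqrt c P"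
  unfolding op_sqrt_def
proof (rule the_equality)
  show "positive_op (scaled_sqrt c P) \<and> scaled_sqrt c P \<circ> scaled_sqrt c P = P"
    using positive_op_scaled_sqrt[OF assms] scaled_sqrt_square[OF assms] by (simp add: fun_eq_iff)
  fix R
  assume "positive_op R \<and> R \<circ> R = P"
  then have "positive_op R" "\<And>x. R (R x) = P x"
    by (auto dest: fun_cong)
  then show "R = scaled_sqrt c P"
    by (rule positive_sqrt_unique[OF assms])
qed

theorem positive_op_op_sqrt:
  assumes "positive_op P"
  shows "positive_op (op_sqrt P)"
proof -
  obtain c where "form_bounded c P" using form_bounded_exists[OF assms] .
  then show ?thesis
    using positive_op_scaled_sqrt[OF assms] op_sqrt_eq_scaled_sqrt[OF assms] by simp
qed

theorem op_sqrt_square: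
  assumes "positive_op P"
  shows "op_sqrt P (op_sqrt P x) = P x"
proof -
  obtain c where "form_bounded c P" using form_bounded_exists[OF assms] .
  then show ?thesis
    using scaled_sqrt_square[OF assms] op_sqrt_eq_scaled_sqrt[OF assms] by simp
qed

theorem op_sqrt_intertwine:
  assumes P1: "positive_op P1" and P2: "positive_op P2"
    and "bounded_clinear C" "\<And>x. C (P1 x) = P2 (C x)"
  shows "C (op_sqrt P1 x) = op_sqrt P2 (C x)"
proof -
  obtain c1 where c1: "form_bounded c1 P1" using form_bounded_exists[OF P1] .
  obtain c2 where c2: "form_bounded c2 P2" using form_bounded_exists[OF P2] .
  have "form_bounded (max c1 c2) P1" "form_bounded (max c1 c2) P2"
    using form_bounded_mono[OF c1] form_bounded_mono[OF c2] by simp_all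
  then show ?thesis
    using scaled_sqrt_intertwine[OF P1 _ P2 _ assms(3,4)]
      op_sqrt_eq_scaled_sqrt[OF P1] op_sqrt_eq_scaled_sqrt[OF P2] by simp
qed

section \<open>The mixed Schwarz inequality\<close>

lemma positive_op_adj_comp:
  assumes T: "bounded_clinear T"
  shows "positive_op (adj T \<circ> T)"
proof -
  have "cinner ((adj T \<circ> T) u) u = cinner (T u) (T u)" for u
    by (simp add: cinner_commute[of "adj T (T u)"] cinner_adj_right[OF T, symmetric] cinner_self)
  then show ?thesis
    using bounded_clinear_compose[OF bounded_clinear_adj[OF T] T]
    by (simp add: positive_op_iff nonneg_form_def cinner_self o_def)
qed

lemma positive_op_op_abs: "bounded_clinear T \<Longrightarrow> positive_op (op_abs T)"
  unfolding op_abs_def by (intro positive_op_op_sqrt positive_op_adj_comp)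

lemma op_abs_square: "bounded_clinear T \<Longrightarrow> op_abs T (op_abs T x) = adj T (T x)"
  unfolding op_abs_def by (simp add: op_sqrt_square positive_op_adj_comp)

lemma op_abs_intertwine:
  assumes T: "bounded_clinear T"
  shows "T (op_abs T x) = op_abs (adj T) (T x)"
  unfolding op_abs_def adj_adj[OF T]
  by (rule op_sqrt_intertwine[OF positive_op_adj_comp[OF T]
        positive_op_adj_comp[OF bounded_clinear_adj[OF T], unfolded adj_adj[OF T]] T]) simp

lemma norm_shift_ge:
  assumes A: "positive_op A" and "0 < e"
  shows "e * norm u \<le> norm (A u + scaleR e u)"
proof -
  have "e * (norm u)\<^sup>2 \<le> Re (cinner (A u + scaleR e u) u)"
    using A by (simp add: cinner_add_left cinner_scaleR_left Re_cinner_self positive_op_iff nonneg_formD)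
  also have "\<dots> \<le> norm (A u + scaleR e u) * norm u"
    by (rule Re_cinner_le_norm)
  finally have "(e * norm u) * norm u \<le> norm (A u + scaleR e u) * norm u"
    by (simp add: power2_eq_square mult.assoc)
  then show ?thesis
    by (cases "u = 0") (simp_all add: mult_le_cancel_right)
qed

lemma closed_range_if_bounded_below:
  fixes F :: "'a::chilbert \<Rightarrow> 'a"
  assumes F: "bounded_clinear F" and "0 < e" and below: "\<And>u. e * norm u \<le> norm (F u)"
  shows "closed (range F)"
  unfolding closed_sequential_limits
proof (intro allI impI, elim conjE)
  fix f l
  assume "\<forall>n. f n \<in> range F" and fl: "f \<longlonglongrightarrow> l"
  then have "\<forall>n. \<exists>w. f n = F w" by blast
  then obtain u where u: "\<And>n. f n = F (u n)"
    by metis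
  have "Cauchy u"
  proof (rule metric_CauchyI)
    fix r :: real
    assume "r > 0"
    with \<open>0 < e\<close> have "e * r > 0" by simp
    then obtain M where M: "\<And>m n. m \<ge> M \<Longrightarrow> n \<ge> M \<Longrightarrow> dist (f m) (f n) < e * r"
      using LIMSEQ_imp_Cauchy[OF fl] unfolding Cauchy_def by blast
    have "dist (u m) (u n) < r" if "m \<ge> M" "n \<ge> M" for m n
    proof -
      have "e * dist (u m) (u n) \<le> dist (f m) (f n)"
        using below[of "u m - u n"] clinear_diff[OF bounded_clinear_clinear[OF F]]
        by (simp add: u dist_norm)
      then have "e * dist (u m) (u n) < e * r" using M[OF that] by linarith
      then show ?thesis using \<open>0 < e\<close> by simp
    qed
    then show "\<exists>M. \<forall>m\<ge>M. \<forall>n\<ge>M. dist (u m) (u n) < r" by blast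
  qed
  then obtain u0 where "u \<longlonglongrightarrow> u0"
    using Cauchy_convergent_iff convergent_def by blast
  then have "(\<lambda>n. F (u n)) \<longlonglongrightarrow> F u0"
    by (rule bounded_linear.tendsto[OF bounded_clinear_bounded_linear[OF F]])
  moreover have "f = (\<lambda>n. F (u n))"
    using u by (rule ext)
  ultimately have "f \<longlonglongrightarrow> F u0"
    by simp
  then show "l \<in> range F"
    using fl LIMSEQ_unique by blast
qed

lemma shift_surj:
  fixes A :: "'a::chilbert \<Rightarrow> 'a"
  assumes A: "positive_op A" and "0 < e"
  obtains w where "A w + scaleR e w = v"
proof -
  define F where "F = (\<lambda>w. A w + scaleR e w)"
  have "bounded_clinear A"
    using A by (simp add: positive_op_iff)
  then obtain K where K: "\<And>u. norm (A u) \<le> K * norm u"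
    using bounded_clinear_pos_bound by blast
  have clin: "clinear F"
    unfolding F_def using bounded_clinear_clinear[OF \<open>bounded_clinear A\<close>]
    by (intro clinear_compose_add clinear_compose_scaleR clinear_id)
  have "norm (F u) \<le> (K + e) * norm u" for u
    using norm_triangle_ineq[of "A u" "scaleR e u"] K[of u] \<open>0 < e\<close> by (simp add: F_def algebra_simps)
  with clin have "bounded_clinear F"
    by (rule bounded_clinearI)
  then have "closed (range F)"
    using \<open>0 < e\<close> by (rule closed_range_if_bounded_below) (simp add: F_def norm_shift_ge[OF A \<open>0 < e\<close>])
  moreover have "csubspace (range F)"
    using clin by (rule csubspace_range)
  ultimately obtain m where "m \<in> range F" and orth: "\<And>u. u \<in> range F \<Longrightarrow> cinner (v - m) u = 0"
    using orthogonal_projection_exists[of "range F" v] by blast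
  have "cinner (F (v - m)) (v - m) = 0"
    using orth[of "F (v - m)"] by (subst cinner_commute) simp
  moreover have "e * (norm (v - m))\<^sup>2 \<le> Re (cinner (F (v - m)) (v - m))"
    using A by (simp add: F_def cinner_add_left cinner_scaleR_left Re_cinner_self positive_op_iff nonneg_formD)
  ultimately have "v = m"
    using \<open>0 < e\<close> by (simp add: mult_le_0_iff)
  with \<open>m \<in> range F\<close> show ?thesis
    using that by (auto simp: F_def)
qed

lemma resolvent_square_form_le:
  fixes B :: "'a::chilbert \<Rightarrow> 'a"
  assumes B: "positive_op B" and "0 < e" and z: "B z + scaleR e z = B (B y)"
  shows "Re (cinner z y) \<le> Re (cinner (B y) y)"
proof -
  \<comment> \<open>z = (B + e)^-1 B^2 y, and B - (B + e)^-1 B^2 = e (B + e)^-1 B is positive\<close>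
  have clin: "clinear B"
    using B by (simp add: positive_op_iff bounded_clinear_clinear)
  obtain v where v: "B v + scaleR e v = y"
    by (rule shift_surj[OF B \<open>0 < e\<close>])
  define d where "d = B y - z"
  have "d = scaleR e (B v)"
  proof -
    define q where "q = d - scaleR e (B v)"
    have Bv: "B (B v) + scaleR e (B v) = B y"
      using v by (metis clinear_add[OF clin] clinear_scaleR[OF clin])
    have "B q = B (B y) - B z - scaleR e (B (B v))"
      by (simp add: q_def d_def clinear_diff[OF clin] clinear_scaleR[OF clin])
    then have "B q + scaleR e q
        = (B (B y) - (B z + scaleR e z)) + scaleR e (B y - (B (B v) + scaleR e (B v)))"
      by (simp add: q_def d_def algebra_simps)
    then have "B q + scaleR e q = 0"
      by (simp add: z Bv)
    then have "e * norm q \<le> 0"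
      using norm_shift_ge[OF B \<open>0 < e\<close>, of q] by simp
    then show ?thesis
      using \<open>0 < e\<close> by (simp add: q_def mult_le_0_iff)
  qed
  then have "Re (cinner d y) = e * ((norm (B v))\<^sup>2 + e * Re (cinner (B v) v))"
    by (simp add: v[symmetric] cinner_scaleR_left cinner_add_right cinner_scaleR_right
        Re_cinner_self algebra_simps)
  moreover have "0 \<le> Re (cinner (B v) v)"
    using B by (simp add: positive_op_iff nonneg_formD)
  ultimately have "0 \<le> Re (cinner d y)"
    using \<open>0 < e\<close> by simp
  then show ?thesis
    by (simp add: d_def cinner_diff_left)
qed

lemma mixed_schwarz_shifted:
  fixes T A B :: "'a::chilbert \<Rightarrow> 'a"
  assumes T: "bounded_clinear T" and A: "positive_op A" and B: "positive_op B"
    and BB: "\<And>u. B (B u) = T (adj T u)" and TA: "\<And>u. T (A u) = B (T u)" and "0 < e"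
  shows "(cmod (cinner (T x) y))\<^sup>2 \<le> (Re (cinner (A x) x) + e * (norm x)\<^sup>2) * Re (cinner (B y) y)"
proof -
  define Ae where "Ae = (\<lambda>u. A u + scaleR e u)"
  have Ae: "clinear Ae" "nonneg_form Ae"
    using A \<open>0 < e\<close> unfolding Ae_def
    by (auto simp: positive_op_iff bounded_clinear_clinear
        intro!: clinear_compose_add clinear_compose_scaleR clinear_id
        nonneg_form_add nonneg_form_scaleR nonneg_form_id)
  obtain w where "A w + scaleR e w = adj T y"
    by (rule shift_surj[OF A \<open>0 < e\<close>])
  then have w: "Ae w = adj T y"
    by (simp add: Ae_def)
  have "cinner (T x) y = cinner (Ae x) w"
    using selfadjoint_if_nonneg_form[OF Ae] by (simp add: cinner_adj_right[OF T] w[symmetric] selfadjoint_def)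
  moreover have "Re (cinner (Ae w) w) \<le> Re (cinner (B y) y)"
  proof -
    have "B (T w) + scaleR e (T w) = B (B y)"
      using bounded_clinear_clinear[OF T]
      by (simp add: TA[symmetric] BB w[symmetric] Ae_def clinear_add clinear_scaleR)
    then have "Re (cinner (T w) y) \<le> Re (cinner (B y) y)"
      by (rule resolvent_square_form_le[OF B \<open>0 < e\<close>])
    moreover have "cinner (Ae w) w = cnj (cinner (T w) y)"
      by (simp add: w cinner_commute[of "adj T y"] cinner_adj_right[OF T])
    ultimately show ?thesis by simp
  qed
  moreover have "Re (cinner (Ae x) x) = Re (cinner (A x) x) + e * (norm x)\<^sup>2"
    by (simp add: Ae_def cinner_add_left cinner_scaleR_left Re_cinner_self)
  ultimately show ?thesis
    using cauchy_schwarz_form[OF Ae, of x w] nonneg_formD[OF Ae(2), of x]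
    by (metis mult_left_mono order_trans)
qed

theorem mixed_schwarz:
  fixes T A B :: "'a::chilbert \<Rightarrow> 'a"
  assumes T: "bounded_clinear T" and A: "positive_op A" and B: "positive_op B"
    and BB: "\<And>u. B (B u) = T (adj T u)" and TA: "\<And>u. T (A u) = B (T u)"
  shows "(cmod (cinner (T x) y))\<^sup>2 \<le> Re (cinner (A x) x) * Re (cinner (B y) y)"
proof (rule field_le_epsilon)
  fix \<epsilon> :: real
  assume "0 < \<epsilon>"
  define b where "b = Re (cinner (B y) y)"
  define e where "e = \<epsilon> / ((norm x)\<^sup>2 * b + 1)"
  have "0 \<le> b"
    using B by (simp add: b_def positive_op_iff nonneg_formD)
  then have "0 < (norm x)\<^sup>2 * b + 1"
    by (simp add: add_nonneg_pos)
  then have "0 < e"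
    using \<open>0 < \<epsilon>\<close> by (simp add: e_def)
  have "e * ((norm x)\<^sup>2 * b) \<le> e * ((norm x)\<^sup>2 * b + 1)"
    using \<open>0 < e\<close> by simp
  also have "\<dots> = \<epsilon>"
    using \<open>0 < (norm x)\<^sup>2 * b + 1\<close> by (simp add: e_def)
  finally have "e * ((norm x)\<^sup>2 * b) \<le> \<epsilon>" .
  with mixed_schwarz_shifted[OF T A B BB TA \<open>0 < e\<close>, of x y]
  show "(cmod (cinner (T x) y))\<^sup>2 \<le> Re (cinner (A x) x) * Re (cinner (B y) y) + \<epsilon>"
    by (simp add: b_def algebra_simps)
qed

lemma aczel_inequality:
  fixes a b p q :: real
  assumes "0 \<le> a" "a \<le> p" "0 \<le> b" "b \<le> q"
  shows "sqrt (p\<^sup>2 - a\<^sup>2) * sqrt (q\<^sup>2 - b\<^sup>2) \<le> p * q - a * b"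
proof (rule power2_le_imp_le)
  have "a\<^sup>2 \<le> p\<^sup>2" "b\<^sup>2 \<le> q\<^sup>2"
    using assms by (simp_all add: power_mono)
  then have "(sqrt (p\<^sup>2 - a\<^sup>2) * sqrt (q\<^sup>2 - b\<^sup>2))\<^sup>2 = (p * q - a * b)\<^sup>2 - (p * b - a * q)\<^sup>2"
    by (simp add: power_mult_distrib power2_eq_square algebra_simps)
  then show "(sqrt (p\<^sup>2 - a\<^sup>2) * sqrt (q\<^sup>2 - b\<^sup>2))\<^sup>2 \<le> (p * q - a * b)\<^sup>2"
    by simp
  show "0 \<le> p * q - a * b"
    using assms by (simp add: mult_mono)
qed

lemma positive_op_cinner_self_real:
  assumes "positive_op S"
  shows "cinner (S x) x = complex_of_real (Re (cinner (S x) x))"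
    and "cinner x (S x) = complex_of_real (Re (cinner (S x) x))"
  using assms by (simp_all add: positive_op_iff nonneg_form_def complex_eq_iff cinner_commute[of x])

lemma norm_sub_expectation:
  fixes S :: "'a::chilbert \<Rightarrow> 'a"
  assumes S: "positive_op S" and x: "norm x = 1"
  shows "norm (S x - scaleR (Re (cinner (S x) x)) x) = sqrt ((norm (S x))\<^sup>2 - (Re (cinner (S x) x))\<^sup>2)"
proof -
  define r where "r = Re (cinner (S x) x)"
  have xx: "cinner x x = 1"
    using x by (simp add: cinner_self)
  have "cinner (S x - scaleR r x) (S x - scaleR r x) = cinner (S x) (S x) - complex_of_real (r * r)"
    using positive_op_cinner_self_real[OF S, of x, folded r_def]
    by (simp add: cinner_diff_left cinner_diff_right cinner_scaleR_left cinner_scaleR_right xx)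
  then have "complex_of_real ((norm (S x - scaleR r x))\<^sup>2) = complex_of_real ((norm (S x))\<^sup>2 - r\<^sup>2)"
    by (simp add: cinner_self power2_eq_square)
  then have "(norm (S x - scaleR r x))\<^sup>2 = (norm (S x))\<^sup>2 - r\<^sup>2"
    by (simp only: of_real_eq_iff)
  then show ?thesis
    by (metis r_def norm_ge_zero real_sqrt_abs abs_of_nonneg)
qed

lemma covariance_le:
  fixes A B :: "'a::chilbert \<Rightarrow> 'a"
  assumes A: "positive_op A" and B: "positive_op B" and x: "norm x = 1"
  shows "cmod (cinner (A (B x)) x - cinner (A x) x * cinner (B x) x)
    \<le> norm (A x) * norm (B x) - Re (cinner (A x) x) * Re (cinner (B x) x)"
proof -
  define a where "a = Re (cinner (A x) x)"
  define b where "b = Re (cinner (B x) x)"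
  note Ax = positive_op_cinner_self_real[OF A, of x, folded a_def]
  note Bx = positive_op_cinner_self_real[OF B, of x, folded b_def]
  define u where "u = A x - scaleR a x"
  define v where "v = B x - scaleR b x"
  have "cinner v u = cinner (B x) (A x) - complex_of_real (a * b)"
    using x by (simp add: u_def v_def cinner_diff_left cinner_diff_right cinner_scaleR_left
        cinner_scaleR_right cinner_self Ax Bx)
  then have "cmod (cinner (A (B x)) x - cinner (A x) x * cinner (B x) x) = cmod (cinner v u)"
    by (simp add: positive_op_selfadjoint[OF A] Ax Bx)
  also have "\<dots> \<le> norm v * norm u"
    by (rule cauchy_schwarz)
  also have "\<dots> = sqrt ((norm (B x))\<^sup>2 - b\<^sup>2) * sqrt ((norm (A x))\<^sup>2 - a\<^sup>2)"
    using norm_sub_expectation[OF A x] norm_sub_expectation[OF B x] by (simp add: u_def v_def a_def b_def)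
  also have "\<dots> \<le> norm (B x) * norm (A x) - b * a"
    using A B Re_cinner_le_norm[of "A x" x] Re_cinner_le_norm[of "B x" x] x
    by (intro aczel_inequality) (simp_all add: a_def b_def positive_op_iff nonneg_formD)
  finally show ?thesis
    by (simp add: a_def b_def mult.commute)
qed

theorem theorem4p1:
  fixes T :: "'a::chilbert \<Rightarrow> 'a" and x :: 'a
  assumes "bounded_clinear T"
    and "norm x = 1"
  shows "cmod (cinner (op_abs T (op_abs (adj T) x)) x
               - cinner (op_abs T x) x * cinner (op_abs (adj T) x) x)
         \<le> norm (op_abs T x) * norm (op_abs (adj T) x) - (cmod (cinner (T x) x))^2"
proof -
  have T: "bounded_clinear T" "bounded_clinear (adj T)"
    using assms(1) bounded_clinear_adj by blast+
  have A: "positive_op (op_abs T)" and B: "positive_op (op_abs (adj T))"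
    using T positive_op_op_abs by blast+
  have "(cmod (cinner (T x) x))\<^sup>2 \<le> Re (cinner (op_abs T x) x) * Re (cinner (op_abs (adj T) x) x)"
    by (rule mixed_schwarz[OF T(1) A B])
      (simp_all add: op_abs_square[OF T(2)] adj_adj[OF T(1)] op_abs_intertwine[OF T(1)])
  with covariance_le[OF A B assms(2)] show ?thesis
    by linarith
qed

end
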